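(* Let $G$ be a topological group admitting an unbounded lower semi-continuous invariant length function. Then $G$ fails topological bounded normal generation.
   Context: A lower semi-continuous invariant length function on $G$ is a map $l:G\to[0,+\infty]$ with $l(1_G)=0$, $l(g^{-1})=l(g)$, $l(gh)\le l(g)+l(h)$, $l(ghg^{-1})=l(h)$ for all $g,h\in G$, and such that $l^{-1}([0,r])$ is closed for every $r\ge0$. It is unbounded if for every $K\in\mathbb N$ there is $g\in G$ with $l(g)\in\,]K,+\infty[$. For $g\in G$, $g^{\pm G}=\{hgh^{-1}:h\in G\}\cup\{hg^{-1}h^{-1}:h\in G\}$; $A^{\cdot n}$ is the set of products of $n$ elements of $A$. $G$ has topological bounded normal generation if for every nontrivial $g\in G$ there is $n(g)\in\mathbb N$ with $\overline{(g^{\pm G})^{\cdot n(g)}}=G$. *)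

theory Defs
  imports "HOL-Analysis.Analysis"
begin

text \<open>A (not necessarily commutative) topological group is modelled by the type class
  topological_group_add, written additively: the identity is 0, the inverse of g is - g,
  and the group product g h is g + h.\<close>

definition lsc_invariant_length :: "('a::topological_group_add \<Rightarrow> ennreal) \<Rightarrow> bool" where
  "lsc_invariant_length l \<longleftrightarrow>
     l 0 = 0 \<and>
     (\<forall>g. l (- g) = l g) \<and>
     (\<forall>g h. l (g + h) \<le> l g + l h) \<and>
     (\<forall>g h. l (g + h + - g) = l h) \<and>
     (\<forall>r::real. r \<ge> 0 \<longrightarrow> closed {g. l g \<le> ennreal r})"

definition unbounded_length :: "('a \<Rightarrow> ennreal) \<Rightarrow> bool" where
  "unbounded_length l \<longleftrightarrow> (\<forall>K::nat. \<exists>g. of_nat K < l g \<and> l g < \<infinity>)"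

definition conj_pm :: "'a::group_add \<Rightarrow> 'a set" where
  "conj_pm g = {h + g + - h | h. True} \<union> {h + - g + - h | h. True}"

definition set_pow :: "'a::monoid_add set \<Rightarrow> nat \<Rightarrow> 'a set" where
  "set_pow A n = {sum_list xs | xs. length xs = n \<and> set xs \<subseteq> A}"

definition top_bounded_normal_generation :: "'a::topological_group_add itself \<Rightarrow> bool" where
  "top_bounded_normal_generation _ \<longleftrightarrow>
     (\<forall>g::'a. g \<noteq> 0 \<longrightarrow> (\<exists>n::nat. closure (set_pow (conj_pm g) n) = UNIV))"

end

theory Submission
  imports Defs
begin

text \<open>Lower semi-continuity makes every finite sublevel set of an invariant length closed, and
  subadditivity together with conjugation invariance bounds the length of a product of n
  conjugates of g or of its inverse by n times the length of g. Hence, for a g of positive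
  finite length, the closure of that set of products has length bounded by a finite constant;
  it cannot be the whole group when the length is unbounded.\<close>

context
  fixes l :: "'a::topological_group_add \<Rightarrow> ennreal"
  assumes length: "lsc_invariant_length l"
begin

lemma length_zero: "l 0 = 0"
  using length by (simp add: lsc_invariant_length_def)

lemma length_add_le: "l (g + h) \<le> l g + l h"
  using length by (simp add: lsc_invariant_length_def)

lemma length_uminus: "l (- g) = l g"
  using length by (simp add: lsc_invariant_length_def)

lemma length_conj: "l (h + g + - h) = l g"
  using length by (simp add: lsc_invariant_length_def)

lemma length_conj_pm:
  assumes "x \<in> conj_pm g"
  shows "l x = l g"
proof -
  obtain h where "x = h + g + - h \<or> x = h + - g + - h"
    using assms unfolding conj_pm_def by blast
  then show ?thesis
    using length_conj length_uminus by metis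
qed

lemma length_sum_list_le:
  assumes "\<forall>x\<in>set xs. l x \<le> c"
  shows "l (sum_list xs) \<le> of_nat (length xs) * c"
  using assms
proof (induction xs)
  case Nil
  then show ?case by (simp add: length_zero)
next
  case (Cons x xs)
  have "l (sum_list (x # xs)) \<le> l x + l (sum_list xs)"
    by (simp add: length_add_le)
  also have "\<dots> \<le> c + of_nat (length xs) * c"
    using Cons by (intro add_mono) auto
  finally show ?case
    by (simp add: distrib_right add.commute)
qed

lemma length_set_pow_conj_pm_le:
  "x \<in> set_pow (conj_pm g) n \<Longrightarrow> l x \<le> of_nat n * l g"
  unfolding set_pow_def using length_sum_list_le[of _ "l g"] length_conj_pm by fastforce

lemma closed_length_sublevel:
  assumes "c < \<infinity>"
  shows "closed {x. l x \<le> c}"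
proof -
  have "c = ennreal (enn2real c)"
    using assms by (simp add: less_top)
  then show ?thesis
    using length enn2real_nonneg[of c] unfolding lsc_invariant_length_def by metis
qed

lemma length_closure_set_pow_conj_pm_le:
  assumes "l g < \<infinity>" and "x \<in> closure (set_pow (conj_pm g) n)"
  shows "l x \<le> of_nat n * l g"
proof -
  have "closed {x. l x \<le> of_nat n * l g}"
    using assms(1) by (intro closed_length_sublevel) (simp add: ennreal_mult_less_top of_nat_less_top)
  then have "closure (set_pow (conj_pm g) n) \<subseteq> {x. l x \<le> of_nat n * l g}"
    using length_set_pow_conj_pm_le by (intro closure_minimal) auto
  then show ?thesis
    using assms(2) by blast
qed

end

lemma unbounded_length_exceeds:
  assumes "unbounded_length l" and "c < \<infinity>"
  obtains x where "c < l x"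
proof -
  obtain K :: nat where K: "enn2real c < real K"
    using reals_Archimedean2 by blast
  have "c = ennreal (enn2real c)"
    using assms(2) by (simp add: less_top)
  also have "\<dots> \<le> ennreal (real K)"
    using K by (intro ennreal_leI) simp
  finally have "c \<le> of_nat K"
    by (simp add: ennreal_of_nat_eq_real_of_nat)
  moreover obtain x where "of_nat K < l x"
    using assms(1) unfolding unbounded_length_def by blast
  ultimately show thesis
    using that order.strict_trans1 by blast
qed

theorem mainTheorem6:
  assumes "\<exists>l :: 'a::topological_group_add \<Rightarrow> ennreal.
             lsc_invariant_length l \<and> unbounded_length l"
  shows "\<not> top_bounded_normal_generation TYPE('a)"
proof
  assume bng: "top_bounded_normal_generation TYPE('a)"
  obtain l :: "'a \<Rightarrow> ennreal" where length: "lsc_invariant_length l" and unbounded: "unbounded_length l"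
    using assms by blast
  obtain g where g: "0 < l g" "l g < \<infinity>"
    using unbounded unfolding unbounded_length_def by (metis of_nat_0)
  then have "g \<noteq> 0"
    using length_zero[OF length] by auto
  then obtain n where n: "closure (set_pow (conj_pm g) n) = UNIV"
    using bng unfolding top_bounded_normal_generation_def by blast
  have bound: "l x \<le> of_nat n * l g" for x
    using length_closure_set_pow_conj_pm_le[OF length g(2)] n by blast
  have "of_nat n * l g < \<infinity>"
    using g(2) by (simp add: ennreal_mult_less_top of_nat_less_top)
  then obtain x where "of_nat n * l g < l x"
    using unbounded_length_exceeds[OF unbounded] by blast
  then show False
    using bound[of x] by (simp add: not_le[symmetric])
qed

end
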